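(* Let $c,a,b\in V$ with $c=a+b$. The following three statements are equivalent: (1) $c=a+b$ is an $X2$-decomposition; (2) $c=a+b$ is a $2Y$-decomposition; (3) $\langle a,b\rangle=\|a\|_X\|b\|_Y$.
   Context: $V$ is a finite dimensional real vector space with a positive definite symmetric bilinear form $\langle\cdot,\cdot\rangle$ and euclidean norm $\|v\|_2=\sqrt{\langle v,v\rangle}$. $\|\cdot\|_X$ is a norm on $V$ and $\|\cdot\|_Y$ is its dual norm, $\|v\|_Y=\max\{\langle v,w\rangle : w\in V,\ \|w\|_X=1\}$. For two norms $\|\cdot\|_P,\|\cdot\|_Q$ on $V$ (each one of $X$, $Y$, $2$), a decomposition $c=a+b$ is called a $PQ$-decomposition if for every decomposition $c=a'+b'$ we have $\|a'\|_P>\|a\|_P$, or $\|b'\|_Q>\|b\|_Q$, or $(\|a'\|_P,\|b'\|_Q)=(\|a\|_P,\|b\|_Q)$. *)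

theory Defs
  imports "HOL-Analysis.Analysis"
begin

definition is_norm :: "('a::real_vector \<Rightarrow> real) \<Rightarrow> bool" where
  "is_norm N \<longleftrightarrow> (\<forall>x. 0 \<le> N x) \<and> (\<forall>x. N x = 0 \<longleftrightarrow> x = 0) \<and>
     (\<forall>r x. N (r *\<^sub>R x) = \<bar>r\<bar> * N x) \<and> (\<forall>x y. N (x + y) \<le> N x + N y)"

text \<open>Dual norm with respect to the inner product: the maximum of inner v w over the
  unit sphere of N (the maximum is attained, so it equals the supremum).\<close>
definition dual_norm :: "('a::real_inner \<Rightarrow> real) \<Rightarrow> 'a \<Rightarrow> real" where
  "dual_norm N v = Sup {v \<bullet> w | w. N w = 1}"

definition PQ_decomposition ::
  "('a::real_vector \<Rightarrow> real) \<Rightarrow> ('a \<Rightarrow> real) \<Rightarrow> 'a \<Rightarrow> 'a \<Rightarrow> 'a \<Rightarrow> bool" where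
  "PQ_decomposition P Q c a b \<longleftrightarrow> c = a + b \<and>
     (\<forall>a' b'. c = a' + b' \<longrightarrow>
        P a' > P a \<or> Q b' > Q b \<or> (P a', Q b') = (P a, Q b))"

end

theory Submission
  imports Defs
begin

text \<open>An X2-decomposition means that the functional \<open>\<langle>b, -\<rangle>\<close> is maximised at \<open>a\<close> over
  the X-ball of radius \<open>\<parallel>a\<parallel>\<^sub>X\<close>: moving \<open>a\<close> a little towards another point of that convex
  ball shortens \<open>b\<close> in the euclidean norm exactly when \<open>\<langle>b, -\<rangle>\<close> increases in that direction.
  By definition of the dual norm this maximum is \<open>\<parallel>a\<parallel>\<^sub>X \<parallel>b\<parallel>\<^sub>Y\<close>, and \<open>\<le>\<close> always holds
  (Hoelder). Swapping the summands, a 2Y-decomposition is a Y2-decomposition of \<open>b + a\<close>; since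
  the dual of Y is X again (by a separating hyperplane), the same argument applies.\<close>

lemma
  assumes "is_norm N"
  shows is_norm_0: "N 0 = 0"
    and is_norm_nonneg: "0 \<le> N x"
    and is_norm_eq_0_iff: "N x = 0 \<longleftrightarrow> x = 0"
    and is_norm_scaleR: "N (r *\<^sub>R x) = \<bar>r\<bar> * N x"
    and is_norm_triangle: "N (x + y) \<le> N x + N y"
  using assms unfolding is_norm_def by auto

lemma is_norm_pos:
  assumes "is_norm N" "x \<noteq> 0"
  shows "0 < N x"
  using is_norm_nonneg[OF assms(1), of x] is_norm_eq_0_iff[OF assms(1), of x] assms(2) by linarith

lemma is_norm_normalize:
  assumes "is_norm N" "x \<noteq> 0"
  shows "N ((1 / N x) *\<^sub>R x) = 1"
  using is_norm_pos[OF assms] by (simp add: is_norm_scaleR[OF assms(1)])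

lemma is_norm_convex_on:
  assumes "is_norm N"
  shows "convex_on UNIV N"
proof (rule convex_onI)
  fix t :: real and x y assume t: "0 < t" "t < 1"
  have "N ((1 - t) *\<^sub>R x + t *\<^sub>R y) \<le> N ((1 - t) *\<^sub>R x) + N (t *\<^sub>R y)"
    by (rule is_norm_triangle[OF assms])
  also have "\<dots> = (1 - t) * N x + t * N y"
    using t by (simp add: is_norm_scaleR[OF assms])
  finally show "N ((1 - t) *\<^sub>R x + t *\<^sub>R y) \<le> (1 - t) * N x + t * N y" .
qed simp

lemma convex_strict_sublevel:
  assumes "convex_on UNIV f"
  shows "convex {x. f x < r}"
proof (rule convexI)
  fix x y and u v :: real
  assume "x \<in> {x. f x < r}" "y \<in> {x. f x < r}" "0 \<le> u" "0 \<le> v" "u + v = 1"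
  moreover from this have "f (u *\<^sub>R x + v *\<^sub>R y) \<le> u * f x + v * f y"
    using assms unfolding convex_on_def by blast
  ultimately show "u *\<^sub>R x + v *\<^sub>R y \<in> {x. f x < r}"
    using convex_bound_lt[of "f x" r "f y" u v] by simp
qed

lemma is_norm_ge_mult_norm:
  fixes N :: "'a::euclidean_space \<Rightarrow> real"
  assumes "is_norm N"
  obtains m where "0 < m" "\<And>x. m * norm x \<le> N x"
proof -
  have "continuous_on (sphere 0 1) N"
    using convex_on_continuous[OF open_UNIV is_norm_convex_on[OF assms]]
    by (rule continuous_on_subset) simp
  from continuous_attains_inf[OF compact_sphere _ this]
  obtain x0 where x0: "x0 \<in> sphere 0 1" "\<And>y. y \<in> sphere 0 1 \<Longrightarrow> N x0 \<le> N y"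
    by auto
  have "N x0 * norm x \<le> N x" for x
  proof (cases "x = 0")
    case False
    have "N x0 \<le> N ((1 / norm x) *\<^sub>R x)" using False by (intro x0(2)) simp
    also have "\<dots> = N x / norm x" by (simp add: is_norm_scaleR[OF assms])
    finally show ?thesis using False by (simp add: field_simps)
  qed (simp add: is_norm_0[OF assms])
  moreover have "0 < N x0" using x0(1) by (intro is_norm_pos[OF assms]) auto
  ultimately show thesis using that by blast
qed

lemma exists_is_norm_eq_1:
  fixes N :: "'a::euclidean_space \<Rightarrow> real"
  assumes "is_norm N"
  obtains w where "N w = 1"
proof -
  obtain i :: 'a where "i \<in> Basis" using nonempty_Basis by blast
  then have "i \<noteq> 0" by auto
  then show thesis using that is_norm_normalize[OF assms] by blast
qed

lemma bdd_above_inner_unit_sphere: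
  fixes N :: "'a::euclidean_space \<Rightarrow> real"
  assumes "is_norm N"
  shows "bdd_above {v \<bullet> w | w. N w = 1}"
proof -
  obtain m where m: "0 < m" "\<And>x. m * norm x \<le> N x" using is_norm_ge_mult_norm[OF assms] by blast
  have "v \<bullet> w \<le> norm v * (1 / m)" if "N w = 1" for w
  proof -
    have "v \<bullet> w \<le> norm v * norm w" by (rule norm_cauchy_schwarz)
    also have "\<dots> \<le> norm v * (1 / m)"
      using m(2)[of w] that m(1) by (intro mult_left_mono) (simp_all add: field_simps)
    finally show ?thesis .
  qed
  then show ?thesis by (intro bdd_aboveI) blast
qed

lemma inner_le_dual_norm:
  fixes N :: "'a::euclidean_space \<Rightarrow> real"
  assumes "is_norm N" "N w = 1"
  shows "v \<bullet> w \<le> dual_norm N v"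
  unfolding dual_norm_def using assms by (intro cSup_upper bdd_above_inner_unit_sphere) auto

lemma dual_norm_le:
  fixes N :: "'a::euclidean_space \<Rightarrow> real"
  assumes "is_norm N" "\<And>w. N w = 1 \<Longrightarrow> v \<bullet> w \<le> M"
  shows "dual_norm N v \<le> M"
  unfolding dual_norm_def using assms exists_is_norm_eq_1[OF assms(1)]
  by (intro cSup_least) blast+

lemma inner_le_norm_mult_dual_norm:
  fixes N :: "'a::euclidean_space \<Rightarrow> real"
  assumes "is_norm N"
  shows "v \<bullet> x \<le> N x * dual_norm N v"
proof (cases "x = 0")
  case False
  from inner_le_dual_norm[OF assms is_norm_normalize[OF assms False], of v]
  show ?thesis using is_norm_pos[OF assms False] by (simp add: field_simps)
qed (simp add: is_norm_0[OF assms])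

lemma dual_norm_nonneg:
  fixes N :: "'a::euclidean_space \<Rightarrow> real"
  assumes "is_norm N"
  shows "0 \<le> dual_norm N v"
proof -
  obtain w where w: "N w = 1" using exists_is_norm_eq_1[OF assms] by blast
  then have "N (- w) = 1" using is_norm_scaleR[OF assms, of "- 1" w] by simp
  with inner_le_dual_norm[OF assms w, of v] inner_le_dual_norm[OF assms this, of v]
  show ?thesis by simp
qed

lemma dual_norm_scaleR_le:
  fixes N :: "'a::euclidean_space \<Rightarrow> real"
  assumes "is_norm N"
  shows "dual_norm N (r *\<^sub>R v) \<le> \<bar>r\<bar> * dual_norm N v"
proof (rule dual_norm_le[OF assms])
  fix w assume w: "N w = 1"
  show "(r *\<^sub>R v) \<bullet> w \<le> \<bar>r\<bar> * dual_norm N v"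
  proof (cases "r = 0")
    case False
    then have "N (sgn r *\<^sub>R w) = 1" using w by (simp add: is_norm_scaleR[OF assms])
    then have le: "v \<bullet> (sgn r *\<^sub>R w) \<le> dual_norm N v" by (rule inner_le_dual_norm[OF assms])
    have "(r *\<^sub>R v) \<bullet> w = \<bar>r\<bar> * (v \<bullet> (sgn r *\<^sub>R w))"
      by (simp only: inner_scaleR_left inner_scaleR_right mult.assoc[symmetric] abs_mult_sgn)
    also have "\<dots> \<le> \<bar>r\<bar> * dual_norm N v"
      using le by (rule mult_left_mono) simp
    finally show ?thesis .
  qed (simp add: dual_norm_nonneg[OF assms])
qed

lemma is_norm_dual_norm:
  fixes N :: "'a::euclidean_space \<Rightarrow> real"
  assumes "is_norm N"
  shows "is_norm (dual_norm N)"
proof -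
  have scaleR: "dual_norm N (r *\<^sub>R v) = \<bar>r\<bar> * dual_norm N v" for r v
  proof (cases "r = 0")
    case True
    then show ?thesis
      using dual_norm_scaleR_le[OF assms, of 0 v] dual_norm_nonneg[OF assms, of 0] by simp
  next
    case False
    have "dual_norm N v = dual_norm N ((1 / r) *\<^sub>R (r *\<^sub>R v))" using False by simp
    also have "\<dots> \<le> \<bar>1 / r\<bar> * dual_norm N (r *\<^sub>R v)" by (rule dual_norm_scaleR_le[OF assms])
    finally have "\<bar>r\<bar> * dual_norm N v \<le> dual_norm N (r *\<^sub>R v)"
      using False by (simp add: field_simps)
    with dual_norm_scaleR_le[OF assms, of r v] show ?thesis by linarith
  qed
  have pos: "0 < dual_norm N v" if "v \<noteq> 0" for v
  proof -
    have "0 < v \<bullet> v" using that by simp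
    also have "\<dots> \<le> N v * dual_norm N v" by (rule inner_le_norm_mult_dual_norm[OF assms])
    finally show ?thesis using is_norm_nonneg[OF assms, of v] by (simp add: zero_less_mult_iff)
  qed
  have "dual_norm N 0 = 0" using scaleR[of 0 0] by simp
  with pos have eq_0_iff: "dual_norm N v = 0 \<longleftrightarrow> v = 0" for v
    by (metis less_irrefl)
  have triangle: "dual_norm N (x + y) \<le> dual_norm N x + dual_norm N y" for x y
  proof (rule dual_norm_le[OF assms])
    fix w assume "N w = 1"
    then show "(x + y) \<bullet> w \<le> dual_norm N x + dual_norm N y"
      unfolding inner_add_left by (intro add_mono inner_le_dual_norm[OF assms])
  qed
  show ?thesis
    unfolding is_norm_def using dual_norm_nonneg[OF assms] eq_0_iff scaleR triangle by blast
qed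

text \<open>The hyperplane separating \<open>a\<close> from the open ball \<open>{x. N x < N a}\<close> supports that ball
  at \<open>a\<close>.\<close>
lemma exists_norming_functional:
  fixes N :: "'a::euclidean_space \<Rightarrow> real"
  assumes "is_norm N" "a \<noteq> 0"
  obtains u where "u \<noteq> 0" "N a * dual_norm N u \<le> u \<bullet> a"
proof -
  have Na: "0 < N a" by (rule is_norm_pos[OF assms])
  have "convex {x. N x < N a}" by (rule convex_strict_sublevel[OF is_norm_convex_on[OF assms(1)]])
  moreover have "0 \<in> {x. N x < N a}" using Na by (simp add: is_norm_0[OF assms(1)])
  ultimately obtain u \<beta> where u: "u \<noteq> 0" "\<And>x. N x < N a \<Longrightarrow> u \<bullet> x \<le> \<beta>" "\<beta> \<le> u \<bullet> a"
    using separating_hyperplane_sets[OF _ convex_singleton, of "{x. N x < N a}" a] by fastforce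
  have "N a * (u \<bullet> w) \<le> u \<bullet> a" if w: "N w = 1" for w
  proof (rule field_le_mult_one_interval)
    fix z :: real assume "0 < z" "z < 1"
    then have "N ((z * N a) *\<^sub>R w) < N a" using w Na by (simp add: is_norm_scaleR[OF assms(1)])
    then have "u \<bullet> ((z * N a) *\<^sub>R w) \<le> u \<bullet> a" using u(2,3) by fastforce
    then show "z * (N a * (u \<bullet> w)) \<le> u \<bullet> a" by (simp add: mult.assoc)
  qed
  then have "dual_norm N u \<le> (u \<bullet> a) / N a"
    using Na by (intro dual_norm_le[OF assms(1)]) (simp add: field_simps)
  then show thesis using that u(1) Na by (simp add: field_simps)
qed

lemma dual_dual_norm:
  fixes N :: "'a::euclidean_space \<Rightarrow> real"
  assumes "is_norm N"
  shows "dual_norm (dual_norm N) = N"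
proof
  fix a
  have Y: "is_norm (dual_norm N)" by (rule is_norm_dual_norm[OF assms])
  show "dual_norm (dual_norm N) a = N a"
  proof (rule antisym)
    show "dual_norm (dual_norm N) a \<le> N a"
    proof (rule dual_norm_le[OF Y])
      fix w assume "dual_norm N w = 1"
      then show "a \<bullet> w \<le> N a"
        using inner_le_norm_mult_dual_norm[OF assms, of w a] by (simp add: inner_commute)
    qed
    show "N a \<le> dual_norm (dual_norm N) a"
    proof (cases "a = 0")
      case True
      then show ?thesis
        by (simp add: is_norm_0[OF assms] is_norm_nonneg[OF is_norm_dual_norm[OF Y]])
    next
      case False
      obtain u where u: "u \<noteq> 0" "N a * dual_norm N u \<le> u \<bullet> a"
        using exists_norming_functional[OF assms False] by blast
      have Yu: "0 < dual_norm N u" by (rule is_norm_pos[OF Y u(1)])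
      have "N a \<le> a \<bullet> ((1 / dual_norm N u) *\<^sub>R u)"
        using u(2) Yu by (simp add: field_simps inner_commute)
      also have "\<dots> \<le> dual_norm (dual_norm N) a"
        by (rule inner_le_dual_norm[OF Y is_norm_normalize[OF Y u(1)]])
      finally show ?thesis .
    qed
  qed
qed

lemma norm_le_norm_diff_imp_inner_nonpos:
  fixes b d :: "'a::real_inner"
  assumes "\<And>t. 0 < t \<Longrightarrow> t \<le> 1 \<Longrightarrow> norm b \<le> norm (b - t *\<^sub>R d)"
  shows "b \<bullet> d \<le> 0"
proof (rule ccontr)
  assume "\<not> b \<bullet> d \<le> 0"
  then have bd: "0 < b \<bullet> d" by simp
  then have "d \<noteq> 0" by auto
  then have dd: "0 < d \<bullet> d" by simp
  define t where "t = min 1 ((b \<bullet> d) / (d \<bullet> d))"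
  have t: "0 < t" "t \<le> 1" "t * (d \<bullet> d) \<le> b \<bullet> d"
    using bd dd by (auto simp: t_def min_def field_simps)
  have "(norm b)\<^sup>2 \<le> (norm (b - t *\<^sub>R d))\<^sup>2" using assms[OF t(1,2)] by (simp add: power_mono)
  then have "t * (2 * (b \<bullet> d) - t * (d \<bullet> d)) \<le> 0"
    by (simp add: power2_norm_eq_inner inner_diff_left inner_diff_right inner_commute algebra_simps)
  moreover have "0 < 2 * (b \<bullet> d) - t * (d \<bullet> d)" using t(3) bd by linarith
  ultimately show False using t(1) by (simp add: mult_le_0_iff)
qed

lemma PQ_decomposition_norm_iff:
  fixes P :: "'a::real_inner \<Rightarrow> real"
  assumes "convex_on UNIV P"
  shows "PQ_decomposition P norm (a + b) a b \<longleftrightarrow> (\<forall>x. P x \<le> P a \<longrightarrow> b \<bullet> x \<le> b \<bullet> a)"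
proof
  assume dec: "PQ_decomposition P norm (a + b) a b"
  show "\<forall>x. P x \<le> P a \<longrightarrow> b \<bullet> x \<le> b \<bullet> a"
  proof (intro allI impI)
    fix x assume x: "P x \<le> P a"
    have "b \<bullet> (x - a) \<le> 0"
    proof (rule norm_le_norm_diff_imp_inner_nonpos)
      fix t :: real assume t: "0 < t" "t \<le> 1"
      have "a + t *\<^sub>R (x - a) = (1 - t) *\<^sub>R a + t *\<^sub>R x" by (simp add: algebra_simps)
      then have "P (a + t *\<^sub>R (x - a)) \<le> (1 - t) * P a + t * P x"
        using convex_onD[OF assms, of t a x] t by simp
      also have "\<dots> \<le> P a"
        using mult_left_mono[OF x, of t] t by (simp add: algebra_simps)
      finally have "P (a + t *\<^sub>R (x - a)) \<le> P a" .
      moreover have "a + b = (a + t *\<^sub>R (x - a)) + (b - t *\<^sub>R (x - a))" by simp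
      ultimately show "norm b \<le> norm (b - t *\<^sub>R (x - a))"
        using dec unfolding PQ_decomposition_def by fastforce
    qed
    then show "b \<bullet> x \<le> b \<bullet> a" by (simp add: inner_diff_right)
  qed
next
  assume max: "\<forall>x. P x \<le> P a \<longrightarrow> b \<bullet> x \<le> b \<bullet> a"
  show "PQ_decomposition P norm (a + b) a b"
    unfolding PQ_decomposition_def
  proof (intro conjI refl allI impI)
    fix a' b' assume c: "a + b = a' + b'"
    show "P a < P a' \<or> norm b < norm b' \<or> (P a', norm b') = (P a, norm b)"
    proof (rule ccontr)
      assume neg: "\<not> ?thesis"
      define d where "d = a - a'"
      have b': "b' = b + d" using c by (simp add: d_def algebra_simps)
      have "0 \<le> b \<bullet> d" using max neg by (simp add: d_def inner_diff_right)
      moreover have "(norm (b + d))\<^sup>2 \<le> (norm b)\<^sup>2" using neg b' by (simp add: power_mono)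
      ultimately have "d \<bullet> d \<le> 0"
        by (simp add: power2_norm_eq_inner inner_add_left inner_add_right inner_commute)
      then have "d = 0" by (metis inner_eq_zero_iff inner_ge_zero order_antisym)
      then show False using neg b' by (simp add: d_def)
    qed
  qed
qed

lemma inner_max_on_sublevel_iff:
  fixes N :: "'a::euclidean_space \<Rightarrow> real"
  assumes "is_norm N"
  shows "(\<forall>x. N x \<le> N a \<longrightarrow> b \<bullet> x \<le> b \<bullet> a) \<longleftrightarrow> b \<bullet> a = N a * dual_norm N b"
proof
  assume max: "\<forall>x. N x \<le> N a \<longrightarrow> b \<bullet> x \<le> b \<bullet> a"
  have "N a * dual_norm N b \<le> b \<bullet> a"
  proof (cases "a = 0")
    case False
    have Na: "0 < N a" by (rule is_norm_pos[OF assms False])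
    have "dual_norm N b \<le> (b \<bullet> a) / N a"
    proof (rule dual_norm_le[OF assms])
      fix w assume "N w = 1"
      then have "N (N a *\<^sub>R w) \<le> N a" using Na by (simp add: is_norm_scaleR[OF assms])
      then have "b \<bullet> (N a *\<^sub>R w) \<le> b \<bullet> a" using max by blast
      then show "b \<bullet> w \<le> b \<bullet> a / N a" using Na by (simp add: field_simps)
    qed
    then show ?thesis using Na by (simp add: field_simps)
  qed (simp add: is_norm_0[OF assms])
  with inner_le_norm_mult_dual_norm[OF assms, of b a] show "b \<bullet> a = N a * dual_norm N b"
    by linarith
next
  assume eq: "b \<bullet> a = N a * dual_norm N b"
  show "\<forall>x. N x \<le> N a \<longrightarrow> b \<bullet> x \<le> b \<bullet> a"
  proof (intro allI impI)
    fix x assume "N x \<le> N a"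
    then have "N x * dual_norm N b \<le> N a * dual_norm N b"
      by (rule mult_right_mono) (rule dual_norm_nonneg[OF assms])
    with inner_le_norm_mult_dual_norm[OF assms, of b x] eq show "b \<bullet> x \<le> b \<bullet> a"
      by linarith
  qed
qed

lemma PQ_decomposition_commute:
  "PQ_decomposition P Q c a b \<longleftrightarrow> PQ_decomposition Q P c b a"
proof -
  have "c = x + y \<longleftrightarrow> c = y + x" for x y :: 'a by (simp add: add.commute)
  then show ?thesis unfolding PQ_decomposition_def by blast
qed

theorem proposition2p2:
  fixes normX :: "'a::euclidean_space \<Rightarrow> real" and a b c :: 'a
  assumes "is_norm normX"
    and "c = a + b"
  shows "(PQ_decomposition normX norm c a b \<longleftrightarrow> PQ_decomposition norm (dual_norm normX) c a b)
    \<and> (PQ_decomposition norm (dual_norm normX) c a b \<longleftrightarrow> a \<bullet> b = normX a * dual_norm normX b)"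
proof -
  have Y: "is_norm (dual_norm normX)" by (rule is_norm_dual_norm[OF assms(1)])
  have X2: "PQ_decomposition normX norm c a b \<longleftrightarrow> a \<bullet> b = normX a * dual_norm normX b"
    unfolding assms(2) PQ_decomposition_norm_iff[OF is_norm_convex_on[OF assms(1)]]
      inner_max_on_sublevel_iff[OF assms(1)] by (simp add: inner_commute)
  have "PQ_decomposition norm (dual_norm normX) c a b \<longleftrightarrow>
      PQ_decomposition (dual_norm normX) norm (b + a) b a"
    using assms(2) by (simp add: PQ_decomposition_commute add.commute)
  also have "\<dots> \<longleftrightarrow> a \<bullet> b = dual_norm normX b * dual_norm (dual_norm normX) a"
    unfolding PQ_decomposition_norm_iff[OF is_norm_convex_on[OF Y]] inner_max_on_sublevel_iff[OF Y] ..
  also have "\<dots> \<longleftrightarrow> a \<bullet> b = normX a * dual_norm normX b"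
    by (simp add: dual_dual_norm[OF assms(1)] mult.commute)
  finally show ?thesis using X2 by blast
qed

end
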